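(* Let $x_0 \in \mathbb R^{n_x}$ and $u_0 \in \mathbb R^{n_u} \times \{0,1\}^{m_u}$ with $(x_0,u_0) \in \mathcal D$, let $v_0 := V u_0$, let $e_0 \in \mathbb R^{n_x}$, and let $x_1 := A x_0 + B u_0 + e_0$. Let $\mathcal V_0 = [(\underline v_{t|0})_{t=0}^{T-1}, (\bar v_{t|0})_{t=0}^{T-1}]$ be an interval with $\underline v_{0|0} \le v_0 \le \bar v_{0|0}$, and let $\mathcal V_1 := [(\underline v_{1|0}, \ldots, \underline v_{T-1|0}, 0), (\bar v_{1|0}, \ldots, \bar v_{T-1|0}, 1)]$ (with $0,1 \in \mathbb R^{m_u}$ the all-zero and all-one vectors). Let $\{\lambda_{t|0}, \rho_{t|0}\}_{t=0}^{T}$ and $\{\mu_{t|0}, \underline\nu_{t|0}, \bar\nu_{t|0}, \sigma_{t|0}\}_{t=0}^{T-1}$ be feasible multipliers for $\mathbf D(\mathcal V_0; x_0)$ with dual objective value $\underline\theta_0(\mathcal V_0)$. Define $$\pi_1 := -|Q x_0|^2 - |R u_0|^2,\qquad \pi_2 := |\rho_{0|0}/2 - Q x_0|^2 + |\sigma_{0|0}/2 - R u_0|^2,$$ $$\pi_3 := (h - F x_0 - G u_0)'\mu_{0|0} + (v_0 - \underline v_{0|0})'\underline\nu_{0|0} + (\bar v_{0|0} - v_0)'\bar\nu_{0|0},\qquad \pi_4 := -e_0'\lambda_{1|0}.$$ Then $\underline\theta_1(\mathcal V_1) := \underline\theta_0(\mathcal V_0) + \sum_{i=1}^4 \pi_i$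 is a lower bound on $\theta(\mathcal V_1; x_1)$, the optimal value of $\mathbf P(\mathcal V_1; x_1)$.
   Context: Fix integers $n_x, n_u, m_u \ge 0$ and $T \ge 1$. Let $A \in \mathbb R^{n_x \times n_x}$, $B \in \mathbb R^{n_x \times (n_u+m_u)}$, and let $F, G, h$ define the polyhedron $\mathcal D = \{(x,u) \in \mathbb R^{n_x} \times \mathbb R^{n_u+m_u} : F x + G u \le h\}$, assumed to contain the origin. Input vectors $u \in \mathbb R^{n_u+m_u}$ have $n_u$ continuous entries and $m_u$ entries intended to be binary; $V \in \mathbb R^{m_u \times (n_u+m_u)}$ is the selection matrix extracting the latter. Let $Q$ (with $n_x$ columns) and $R$ (with $n_u+m_u$ columns) be weight matrices, possibly rank deficient. An interval is a set $\mathcal V = [(\underline v_t)_{t=0}^{T-1}, (\bar v_t)_{t=0}^{T-1}] \subset \mathbb R^{T m_u}$ with $\underline v_t, \bar v_t \in \{0,1\}^{m_u}$, $\underline v_t \le \bar v_t$. For an interval $\mathcal V$ and $\xi \in \mathbb R^{n_x}$, the QP $\mathbf P(\mathcal V; \xi)$ is: minimize $\sum_{t=0}^T |Q x_t|^2 + \sum_{t=0}^{T-1} |R u_t|^2$ over $x_0,\ldots,x_T \in \mathbb R^{n_x}$, $u_0, \ldots, u_{T-1} \in \mathbb R^{n_u+m_u}$ subject to $x_0 = \xi$, $x_{t+1} = A x_t + B u_t$, $(x_t, u_t) \in \mathcal D$, $\underline v_t \le V u_t \le \bar v_t$ ($t = 0, \ldots, T-1$); its optimal value is $\theta(\mathcal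 V;\xi) \in \mathbb R_{\ge 0} \cup \{\infty\}$ ($\infty$ if infeasible). Its dual $\mathbf D(\mathcal V; \xi)$ is: maximize $$-\sum_{t=0}^{T} |\rho_t/2|^2 - \sum_{t=0}^{T-1}\big(|\sigma_t/2|^2 + h'\mu_t + \bar v_t'\bar\nu_t - \underline v_t'\underline\nu_t\big) - \xi'\lambda_0$$ over $\{\lambda_t, \rho_t\}_{t=0}^T$, $\{\mu_t, \underline\nu_t, \bar\nu_t, \sigma_t\}_{t=0}^{T-1}$ subject to: $Q'\rho_t + \lambda_t - A'\lambda_{t+1} + F'\mu_t = 0$ ($t=0,\ldots,T-1$); $Q'\rho_T + \lambda_T = 0$; $R'\sigma_t - B'\lambda_{t+1} + G'\mu_t + V'(\bar\nu_t - \underline\nu_t) = 0$ ($t = 0, \ldots, T-1$); $(\mu_t, \underline\nu_t, \bar\nu_t) \ge 0$. The dual objective value of a feasible point is the value of this objective at it. $|\cdot|$ is the Euclidean norm, $'$ the transpose. *)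

theory Defs
  imports "Jordan_Normal_Form.Matrix" "HOL-Library.Extended_Real"
begin

definition sqnorm :: "real vec \<Rightarrow> real" where
  "sqnorm v = v \<bullet> v"

definition sel_mat :: "nat \<Rightarrow> nat \<Rightarrow> real mat" where
  "sel_mat nu mu = mat mu (nu + mu) (\<lambda>(i, j). if j = nu + i then 1 else 0)"

definition is_interval :: "nat \<Rightarrow> nat \<Rightarrow> (nat \<Rightarrow> real vec) \<Rightarrow> (nat \<Rightarrow> real vec) \<Rightarrow> bool" where
  "is_interval m T vlo vhi \<longleftrightarrow>
     (\<forall>t<T. vlo t \<in> carrier_vec m \<and> vhi t \<in> carrier_vec m \<and>
            (\<forall>i<m. vlo t $ i \<in> {0, 1} \<and> vhi t $ i \<in> {0, 1}) \<and> vlo t \<le> vhi t)"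

definition primal_feasible ::
  "real mat \<Rightarrow> real mat \<Rightarrow> real mat \<Rightarrow> real mat \<Rightarrow> real vec \<Rightarrow> real mat \<Rightarrow> nat \<Rightarrow>
   (nat \<Rightarrow> real vec) \<Rightarrow> (nat \<Rightarrow> real vec) \<Rightarrow> real vec \<Rightarrow>
   (nat \<Rightarrow> real vec) \<Rightarrow> (nat \<Rightarrow> real vec) \<Rightarrow> bool" where
  "primal_feasible A B F G h V T vlo vhi \<xi> xs us \<longleftrightarrow>
     xs 0 = \<xi> \<and>
     (\<forall>t\<le>T. xs t \<in> carrier_vec (dim_col A)) \<and>
     (\<forall>t<T. us t \<in> carrier_vec (dim_col B)) \<and>
     (\<forall>t<T. xs (t + 1) = A *\<^sub>v xs t + B *\<^sub>v us t) \<and>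
     (\<forall>t<T. F *\<^sub>v xs t + G *\<^sub>v us t \<le> h) \<and>
     (\<forall>t<T. vlo t \<le> V *\<^sub>v us t \<and> V *\<^sub>v us t \<le> vhi t)"

definition primal_cost :: "real mat \<Rightarrow> real mat \<Rightarrow> nat \<Rightarrow>
   (nat \<Rightarrow> real vec) \<Rightarrow> (nat \<Rightarrow> real vec) \<Rightarrow> real" where
  "primal_cost Q R T xs us =
     (\<Sum>t\<le>T. sqnorm (Q *\<^sub>v xs t)) + (\<Sum>t<T. sqnorm (R *\<^sub>v us t))"

text \<open>Optimal value theta(V; xi) of P(V; xi); it is \<infinity> if the QP is infeasible.\<close>
definition theta ::
  "real mat \<Rightarrow> real mat \<Rightarrow> real mat \<Rightarrow> real mat \<Rightarrow> real vec \<Rightarrow> real mat \<Rightarrow>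
   real mat \<Rightarrow> real mat \<Rightarrow> nat \<Rightarrow>
   (nat \<Rightarrow> real vec) \<Rightarrow> (nat \<Rightarrow> real vec) \<Rightarrow> real vec \<Rightarrow> ereal" where
  "theta A B F G h V Q R T vlo vhi \<xi> =
     Inf {ereal (primal_cost Q R T xs us) | xs us. primal_feasible A B F G h V T vlo vhi \<xi> xs us}"

definition dual_feasible ::
  "real mat \<Rightarrow> real mat \<Rightarrow> real mat \<Rightarrow> real mat \<Rightarrow> real mat \<Rightarrow> real mat \<Rightarrow> real mat \<Rightarrow> nat \<Rightarrow>
   (nat \<Rightarrow> real vec) \<Rightarrow> (nat \<Rightarrow> real vec) \<Rightarrow> (nat \<Rightarrow> real vec) \<Rightarrow>
   (nat \<Rightarrow> real vec) \<Rightarrow> (nat \<Rightarrow> real vec) \<Rightarrow> (nat \<Rightarrow> real vec) \<Rightarrow> bool" where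
  "dual_feasible A B F G V Q R T lam rho mu nlo nhi sig \<longleftrightarrow>
     (\<forall>t\<le>T. lam t \<in> carrier_vec (dim_col A) \<and> rho t \<in> carrier_vec (dim_row Q)) \<and>
     (\<forall>t<T. mu t \<in> carrier_vec (dim_row F) \<and> nlo t \<in> carrier_vec (dim_row V) \<and>
            nhi t \<in> carrier_vec (dim_row V) \<and> sig t \<in> carrier_vec (dim_row R)) \<and>
     (\<forall>t<T. transpose_mat Q *\<^sub>v rho t + lam t - transpose_mat A *\<^sub>v lam (t + 1)
             + transpose_mat F *\<^sub>v mu t = 0\<^sub>v (dim_col A)) \<and>
     transpose_mat Q *\<^sub>v rho T + lam T = 0\<^sub>v (dim_col A) \<and>
     (\<forall>t<T. transpose_mat R *\<^sub>v sig t - transpose_mat B *\<^sub>v lam (t + 1)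
             + transpose_mat G *\<^sub>v mu t + transpose_mat V *\<^sub>v (nhi t - nlo t)
             = 0\<^sub>v (dim_col B)) \<and>
     (\<forall>t<T. mu t \<ge> 0\<^sub>v (dim_row F) \<and> nlo t \<ge> 0\<^sub>v (dim_row V) \<and> nhi t \<ge> 0\<^sub>v (dim_row V))"

definition dual_obj ::
  "real vec \<Rightarrow> nat \<Rightarrow> (nat \<Rightarrow> real vec) \<Rightarrow> (nat \<Rightarrow> real vec) \<Rightarrow> real vec \<Rightarrow>
   (nat \<Rightarrow> real vec) \<Rightarrow> (nat \<Rightarrow> real vec) \<Rightarrow> (nat \<Rightarrow> real vec) \<Rightarrow>
   (nat \<Rightarrow> real vec) \<Rightarrow> (nat \<Rightarrow> real vec) \<Rightarrow> (nat \<Rightarrow> real vec) \<Rightarrow> real" where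
  "dual_obj h T vlo vhi \<xi> lam rho mu nlo nhi sig =
     - (\<Sum>t\<le>T. sqnorm ((1/2) \<cdot>\<^sub>v rho t))
     - (\<Sum>t<T. sqnorm ((1/2) \<cdot>\<^sub>v sig t) + h \<bullet> mu t + vhi t \<bullet> nhi t - vlo t \<bullet> nlo t)
     - \<xi> \<bullet> lam 0"

end

theory Submission
  imports Defs
begin

text \<open>Dual feasibility depends neither on the interval nor on the initial state, so the multipliers
  of D(V0; x0) shifted one step forward (stage 0 dropped, zeros appended) are feasible for
  D(V1; x1): at the new last stage the state constraint becomes the old terminal constraint
  Q'rho_T + lambda_T = 0. Weak duality (complete the square in every stage and telescope
  lambda_t'x_t along a trajectory) makes their objective a lower bound on theta(V1; x1). Pairing
  the stage-0 dual constraints with x0 and u0 gives a Lagrangian identity which shows that this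
  objective is exactly theta0(V0) + pi1 + pi2 + pi3 + pi4.\<close>

lemma sqnorm_nonneg: "0 \<le> sqnorm v"
  unfolding sqnorm_def scalar_prod_def by (intro sum_nonneg) simp

lemma sqnorm_half_minus:
  assumes "y \<in> carrier_vec n" "z \<in> carrier_vec n"
  shows "sqnorm ((1/2) \<cdot>\<^sub>v z - y) = sqnorm ((1/2) \<cdot>\<^sub>v z) - z \<bullet> y + sqnorm y"
  using assms unfolding sqnorm_def
  by (simp add: minus_scalar_prod_distrib[of _ n] scalar_prod_minus_distrib[of _ n]
      comm_scalar_prod[of y n z]) (simp add: field_simps)

lemma scalar_prod_le_sqnorm_half:
  assumes "y \<in> carrier_vec n" "z \<in> carrier_vec n"
  shows "z \<bullet> y \<le> sqnorm y + sqnorm ((1/2) \<cdot>\<^sub>v z)"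
  using sqnorm_half_minus[OF assms] sqnorm_nonneg[of "(1/2) \<cdot>\<^sub>v z - y"] by linarith

lemma scalar_prod_left_mono:
  fixes v w z :: "real vec"
  assumes "v \<le> w" "0\<^sub>v (dim_vec w) \<le> z"
  shows "v \<bullet> z \<le> w \<bullet> z"
proof -
  have dims: "dim_vec v = dim_vec w" "dim_vec z = dim_vec w"
    using assms unfolding less_eq_vec_def by auto
  have "(\<Sum>i<dim_vec w. v $ i * z $ i) \<le> (\<Sum>i<dim_vec w. w $ i * z $ i)"
    using assms dims unfolding less_eq_vec_def by (intro sum_mono mult_right_mono) auto
  then show ?thesis
    using dims unfolding scalar_prod_def by (simp add: atLeast0LessThan)
qed

lemma terminal_weak_duality:
  fixes Q :: "real mat"
  assumes Q: "Q \<in> carrier_mat q n" and x: "x \<in> carrier_vec n"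
    and lam: "lam \<in> carrier_vec n" and rho: "rho \<in> carrier_vec q"
    and terminal: "transpose_mat Q *\<^sub>v rho + lam = 0\<^sub>v n"
  shows "- (x \<bullet> lam) \<le> sqnorm (Q *\<^sub>v x) + sqnorm ((1/2) \<cdot>\<^sub>v rho)"
proof -
  have "(transpose_mat Q *\<^sub>v rho + lam) \<bullet> x = 0"
    using terminal x by simp
  then have "- (x \<bullet> lam) = rho \<bullet> (Q *\<^sub>v x)"
    using Q x lam rho
    by (simp add: add_scalar_prod_distrib[of _ n] transpose_vec_mult_scalar comm_scalar_prod[of x n])
  also have "\<dots> \<le> sqnorm (Q *\<^sub>v x) + sqnorm ((1/2) \<cdot>\<^sub>v rho)"
    using Q x rho by (intro scalar_prod_le_sqnorm_half) auto
  finally show ?thesis .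
qed

definition shift_seq :: "nat \<Rightarrow> 'a \<Rightarrow> (nat \<Rightarrow> 'a) \<Rightarrow> nat \<Rightarrow> 'a" where
  "shift_seq N z f = (\<lambda>t. if t + 1 < N then f (t + 1) else z)"

lemma sum_lessThan_shift_pad:
  fixes a :: "nat \<Rightarrow> 'a::ab_group_add"
  assumes "N \<ge> 1"
  shows "(\<Sum>t<N. if t + 1 < N then a (t + 1) else b) = (\<Sum>t<N. a t) - a 0 + b"
proof -
  obtain N' where N: "N = Suc N'" using assms by (cases N) auto
  have "(\<Sum>t<N. if t + 1 < N then a (t + 1) else b) = (\<Sum>t<N'. a (Suc t)) + b"
    unfolding N by (simp add: lessThan_Suc)
  then show ?thesis
    unfolding N sum.lessThan_Suc_shift by simp
qed

lemma dual_obj_shift: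
  assumes "T \<ge> 1"
  shows "dual_obj h T (shift_seq T zlo vlo) (shift_seq T zhi vhi) \<xi>'
      (shift_seq (T + 1) (0\<^sub>v nx) lam) (shift_seq (T + 1) (0\<^sub>v q) rho) (shift_seq T (0\<^sub>v p) mu)
      (shift_seq T (0\<^sub>v k) nlo) (shift_seq T (0\<^sub>v k) nhi) (shift_seq T (0\<^sub>v r) sig)
    = dual_obj h T vlo vhi \<xi> lam rho mu nlo nhi sig
      + (sqnorm ((1/2) \<cdot>\<^sub>v rho 0) + sqnorm ((1/2) \<cdot>\<^sub>v sig 0)
         + h \<bullet> mu 0 + vhi 0 \<bullet> nhi 0 - vlo 0 \<bullet> nlo 0 + \<xi> \<bullet> lam 0 - \<xi>' \<bullet> lam 1)"
proof -
  define c where "c t = sqnorm ((1/2) \<cdot>\<^sub>v sig t) + h \<bullet> mu t + vhi t \<bullet> nhi t - vlo t \<bullet> nlo t" for t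
  have zero_right: "v \<bullet> 0\<^sub>v n = 0" for v :: "real vec" and n
    by (simp add: scalar_prod_def)
  have rho_sum: "(\<Sum>t\<le>T. sqnorm ((1/2) \<cdot>\<^sub>v shift_seq (T + 1) (0\<^sub>v q) rho t))
      = (\<Sum>t\<le>T. sqnorm ((1/2) \<cdot>\<^sub>v rho t)) - sqnorm ((1/2) \<cdot>\<^sub>v rho 0)"
  proof -
    have "(\<Sum>t\<le>T. sqnorm ((1/2) \<cdot>\<^sub>v shift_seq (T + 1) (0\<^sub>v q) rho t))
        = (\<Sum>t<T + 1. if t + 1 < T + 1 then sqnorm ((1/2) \<cdot>\<^sub>v rho (t + 1)) else 0)"
      unfolding shift_seq_def sqnorm_def lessThan_Suc_atMost[symmetric]
      by (intro sum.cong) (auto simp: zero_right)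
    then show ?thesis
      by (subst (asm) sum_lessThan_shift_pad) (auto simp: lessThan_Suc_atMost)
  qed
  have sig_sum: "(\<Sum>t<T. sqnorm ((1/2) \<cdot>\<^sub>v shift_seq T (0\<^sub>v r) sig t) + h \<bullet> shift_seq T (0\<^sub>v p) mu t
        + shift_seq T zhi vhi t \<bullet> shift_seq T (0\<^sub>v k) nhi t
        - shift_seq T zlo vlo t \<bullet> shift_seq T (0\<^sub>v k) nlo t)
      = (\<Sum>t<T. c t) - c 0"
  proof -
    have "(\<Sum>t<T. sqnorm ((1/2) \<cdot>\<^sub>v shift_seq T (0\<^sub>v r) sig t) + h \<bullet> shift_seq T (0\<^sub>v p) mu t
          + shift_seq T zhi vhi t \<bullet> shift_seq T (0\<^sub>v k) nhi t
          - shift_seq T zlo vlo t \<bullet> shift_seq T (0\<^sub>v k) nlo t)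
        = (\<Sum>t<T. if t + 1 < T then c (t + 1) else 0)"
      unfolding shift_seq_def sqnorm_def c_def by (intro sum.cong) (auto simp: zero_right)
    then show ?thesis
      using sum_lessThan_shift_pad[OF assms, of c 0] by simp
  qed
  have "shift_seq (T + 1) (0\<^sub>v nx) lam 0 = lam 1"
    using assms by (simp add: shift_seq_def)
  then show ?thesis
    unfolding dual_obj_def rho_sum sig_sum c_def by simp
qed

context
  fixes A B F G Q R V :: "real mat" and nx m p q r k :: nat
  assumes A: "A \<in> carrier_mat nx nx" and B: "B \<in> carrier_mat nx m"
    and F: "F \<in> carrier_mat p nx" and G: "G \<in> carrier_mat p m"
    and Q: "Q \<in> carrier_mat q nx" and R: "R \<in> carrier_mat r m" and V: "V \<in> carrier_mat k m"
begin

lemma stage_lagrangian_identity: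
  assumes x: "x \<in> carrier_vec nx" and u: "u \<in> carrier_vec m"
    and lam: "lam \<in> carrier_vec nx" and lam': "lam' \<in> carrier_vec nx"
    and rho: "rho \<in> carrier_vec q" and sig: "sig \<in> carrier_vec r"
    and mu: "mu \<in> carrier_vec p" and nlo: "nlo \<in> carrier_vec k" and nhi: "nhi \<in> carrier_vec k"
    and state: "transpose_mat Q *\<^sub>v rho + lam - transpose_mat A *\<^sub>v lam'
                  + transpose_mat F *\<^sub>v mu = 0\<^sub>v nx"
    and input: "transpose_mat R *\<^sub>v sig - transpose_mat B *\<^sub>v lam' + transpose_mat G *\<^sub>v mu
                  + transpose_mat V *\<^sub>v (nhi - nlo) = 0\<^sub>v m"
  shows "rho \<bullet> (Q *\<^sub>v x) + sig \<bullet> (R *\<^sub>v u) + mu \<bullet> (F *\<^sub>v x + G *\<^sub>v u)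
         + (nhi - nlo) \<bullet> (V *\<^sub>v u) = (A *\<^sub>v x + B *\<^sub>v u) \<bullet> lam' - x \<bullet> lam"
proof -
  have "(transpose_mat Q *\<^sub>v rho + lam - transpose_mat A *\<^sub>v lam' + transpose_mat F *\<^sub>v mu) \<bullet> x = 0"
    using state x by simp
  then have state_x: "rho \<bullet> (Q *\<^sub>v x) + x \<bullet> lam - (A *\<^sub>v x) \<bullet> lam' + mu \<bullet> (F *\<^sub>v x) = 0"
    using A F Q x lam lam' rho mu
    by (simp add: add_scalar_prod_distrib[of _ nx] minus_scalar_prod_distrib[of _ nx]
        transpose_vec_mult_scalar comm_scalar_prod[of x nx lam] comm_scalar_prod[of "A *\<^sub>v x" nx lam'])
  have "(transpose_mat R *\<^sub>v sig - transpose_mat B *\<^sub>v lam' + transpose_mat G *\<^sub>v mu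
          + transpose_mat V *\<^sub>v (nhi - nlo)) \<bullet> u = 0"
    using input u by simp
  then have input_u: "sig \<bullet> (R *\<^sub>v u) - (B *\<^sub>v u) \<bullet> lam' + mu \<bullet> (G *\<^sub>v u)
      + (nhi - nlo) \<bullet> (V *\<^sub>v u) = 0"
    using B G R V u lam' sig mu nlo nhi
    by (simp add: add_scalar_prod_distrib[of _ m] minus_scalar_prod_distrib[of _ m]
        transpose_vec_mult_scalar comm_scalar_prod[of "B *\<^sub>v u" nx lam'])
  show ?thesis
    using state_x input_u A B F G x u lam' mu
    by (simp add: scalar_prod_add_distrib[of _ p] add_scalar_prod_distrib[of _ nx])
qed

lemma stage_weak_duality:
  assumes x: "x \<in> carrier_vec nx" and u: "u \<in> carrier_vec m"
    and lam: "lam \<in> carrier_vec nx" and lam': "lam' \<in> carrier_vec nx"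
    and rho: "rho \<in> carrier_vec q" and sig: "sig \<in> carrier_vec r"
    and mu: "mu \<in> carrier_vec p" and nlo: "nlo \<in> carrier_vec k" and nhi: "nhi \<in> carrier_vec k"
    and state: "transpose_mat Q *\<^sub>v rho + lam - transpose_mat A *\<^sub>v lam'
                  + transpose_mat F *\<^sub>v mu = 0\<^sub>v nx"
    and input: "transpose_mat R *\<^sub>v sig - transpose_mat B *\<^sub>v lam' + transpose_mat G *\<^sub>v mu
                  + transpose_mat V *\<^sub>v (nhi - nlo) = 0\<^sub>v m"
    and mu_nonneg: "0\<^sub>v p \<le> mu" and nlo_nonneg: "0\<^sub>v k \<le> nlo" and nhi_nonneg: "0\<^sub>v k \<le> nhi"
    and constr: "F *\<^sub>v x + G *\<^sub>v u \<le> h"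
    and lower: "vlo \<le> V *\<^sub>v u" and upper: "V *\<^sub>v u \<le> vhi"
  shows "(A *\<^sub>v x + B *\<^sub>v u) \<bullet> lam' - x \<bullet> lam
    \<le> sqnorm (Q *\<^sub>v x) + sqnorm (R *\<^sub>v u) + sqnorm ((1/2) \<cdot>\<^sub>v rho) + sqnorm ((1/2) \<cdot>\<^sub>v sig)
       + h \<bullet> mu + vhi \<bullet> nhi - vlo \<bullet> nlo"
proof -
  have dims: "dim_vec h = p" "dim_vec vhi = k"
    using constr upper F G V unfolding less_eq_vec_def by auto
  have "rho \<bullet> (Q *\<^sub>v x) \<le> sqnorm (Q *\<^sub>v x) + sqnorm ((1/2) \<cdot>\<^sub>v rho)"
    using Q x rho by (intro scalar_prod_le_sqnorm_half) auto
  moreover have "sig \<bullet> (R *\<^sub>v u) \<le> sqnorm (R *\<^sub>v u) + sqnorm ((1/2) \<cdot>\<^sub>v sig)"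
    using R u sig by (intro scalar_prod_le_sqnorm_half) auto
  moreover have "mu \<bullet> (F *\<^sub>v x + G *\<^sub>v u) \<le> h \<bullet> mu"
    using scalar_prod_left_mono[OF constr] mu_nonneg dims F G x u mu
    by (simp add: comm_scalar_prod[of mu p])
  moreover have "(nhi - nlo) \<bullet> (V *\<^sub>v u) \<le> vhi \<bullet> nhi - vlo \<bullet> nlo"
    using scalar_prod_left_mono[OF upper, of nhi] scalar_prod_left_mono[OF lower, of nlo]
      nhi_nonneg nlo_nonneg dims V u nlo nhi
    by (simp add: comm_scalar_prod[of "nhi - nlo" k] scalar_prod_minus_distrib[of _ k])
  ultimately show ?thesis
    using stage_lagrangian_identity[OF x u lam lam' rho sig mu nlo nhi state input]
    by linarith
qed

lemma dual_obj_le_primal_cost: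
  assumes df: "dual_feasible A B F G V Q R T lam rho mu nlo nhi sig"
    and pf: "primal_feasible A B F G h V T vlo vhi \<xi> xs us"
  shows "dual_obj h T vlo vhi \<xi> lam rho mu nlo nhi sig \<le> primal_cost Q R T xs us"
proof -
  have dims: "dim_col A = nx" "dim_col B = m" "dim_row F = p" "dim_row V = k"
    "dim_row Q = q" "dim_row R = r"
    using A B F V Q R by auto
  note df' = df[unfolded dual_feasible_def dims] and pf' = pf[unfolded primal_feasible_def dims]
  define g where "g t = xs t \<bullet> lam t" for t
  define S where "S t = sqnorm (Q *\<^sub>v xs t) + sqnorm (R *\<^sub>v us t) + sqnorm ((1/2) \<cdot>\<^sub>v rho t)
     + sqnorm ((1/2) \<cdot>\<^sub>v sig t) + h \<bullet> mu t + vhi t \<bullet> nhi t - vlo t \<bullet> nlo t" for t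
  have "g (Suc t) - g t \<le> S t" if t: "t < T" for t
  proof -
    have "g (Suc t) - g t = (A *\<^sub>v xs t + B *\<^sub>v us t) \<bullet> lam (t + 1) - xs t \<bullet> lam t"
      using pf' t by (simp add: g_def)
    also have "\<dots> \<le> S t"
      unfolding S_def by (rule stage_weak_duality) (use df' pf' t in auto)
    finally show ?thesis .
  qed
  then have "g T - g 0 \<le> (\<Sum>t<T. S t)"
    by (simp only: sum_lessThan_telescope[symmetric]) (rule sum_mono, simp)
  moreover have "- g T \<le> sqnorm (Q *\<^sub>v xs T) + sqnorm ((1/2) \<cdot>\<^sub>v rho T)"
    unfolding g_def by (rule terminal_weak_duality[OF Q]) (use df' pf' in auto)
  moreover have "primal_cost Q R T xs us - dual_obj h T vlo vhi \<xi> lam rho mu nlo nhi sig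
     = (\<Sum>t<T. S t) + sqnorm (Q *\<^sub>v xs T) + sqnorm ((1/2) \<cdot>\<^sub>v rho T) + g 0"
    using pf' unfolding primal_cost_def dual_obj_def S_def g_def
    by (simp add: lessThan_Suc_atMost[symmetric] sum.distrib sum_subtractf)
  ultimately show ?thesis by linarith
qed

lemma dual_obj_le_theta:
  assumes df: "dual_feasible A B F G V Q R T lam rho mu nlo nhi sig"
  shows "ereal (dual_obj h T vlo vhi \<xi> lam rho mu nlo nhi sig) \<le> theta A B F G h V Q R T vlo vhi \<xi>"
  unfolding theta_def
  by (rule Inf_greatest) (auto intro: dual_obj_le_primal_cost[OF df])

lemma dual_feasible_shift:
  assumes df: "dual_feasible A B F G V Q R T lam rho mu nlo nhi sig"
  shows "dual_feasible A B F G V Q R T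
    (shift_seq (T + 1) (0\<^sub>v nx) lam) (shift_seq (T + 1) (0\<^sub>v q) rho) (shift_seq T (0\<^sub>v p) mu)
    (shift_seq T (0\<^sub>v k) nlo) (shift_seq T (0\<^sub>v k) nhi) (shift_seq T (0\<^sub>v r) sig)"
proof -
  have dims: "dim_col A = nx" "dim_col B = m" "dim_row F = p" "dim_row V = k"
    "dim_row Q = q" "dim_row R = r"
    using A B F V Q R by auto
  note df' = df[unfolded dual_feasible_def dims]
  have last_stage: "transpose_mat Q *\<^sub>v rho (Suc t) + lam (Suc t) - transpose_mat A *\<^sub>v 0\<^sub>v nx
      + transpose_mat F *\<^sub>v 0\<^sub>v p = 0\<^sub>v nx" if "Suc t = T" for t
  proof -
    have "transpose_mat A *\<^sub>v 0\<^sub>v nx = 0\<^sub>v nx" "transpose_mat F *\<^sub>v 0\<^sub>v p = 0\<^sub>v nx"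
      using A F by auto
    then show ?thesis using df' Q that by auto
  qed
  show ?thesis
    unfolding dual_feasible_def dims shift_seq_def
    using df' last_stage A B F G Q R V by (auto dest: Suc_lessI)
qed

lemma stage_dual_increment_decomposition:
  assumes x: "x \<in> carrier_vec nx" and u: "u \<in> carrier_vec m" and e: "e \<in> carrier_vec nx"
    and h: "h \<in> carrier_vec p" and vlo: "vlo \<in> carrier_vec k" and vhi: "vhi \<in> carrier_vec k"
    and lam: "lam \<in> carrier_vec nx" and lam': "lam' \<in> carrier_vec nx"
    and rho: "rho \<in> carrier_vec q" and sig: "sig \<in> carrier_vec r"
    and mu: "mu \<in> carrier_vec p" and nlo: "nlo \<in> carrier_vec k" and nhi: "nhi \<in> carrier_vec k"
    and state: "transpose_mat Q *\<^sub>v rho + lam - transpose_mat A *\<^sub>v lam'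
                  + transpose_mat F *\<^sub>v mu = 0\<^sub>v nx"
    and input: "transpose_mat R *\<^sub>v sig - transpose_mat B *\<^sub>v lam' + transpose_mat G *\<^sub>v mu
                  + transpose_mat V *\<^sub>v (nhi - nlo) = 0\<^sub>v m"
  shows "sqnorm ((1/2) \<cdot>\<^sub>v rho) + sqnorm ((1/2) \<cdot>\<^sub>v sig) + h \<bullet> mu + vhi \<bullet> nhi - vlo \<bullet> nlo
      + x \<bullet> lam - (A *\<^sub>v x + B *\<^sub>v u + e) \<bullet> lam'
    = (- sqnorm (Q *\<^sub>v x) - sqnorm (R *\<^sub>v u))
      + (sqnorm ((1/2) \<cdot>\<^sub>v rho - Q *\<^sub>v x) + sqnorm ((1/2) \<cdot>\<^sub>v sig - R *\<^sub>v u))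
      + ((h - F *\<^sub>v x - G *\<^sub>v u) \<bullet> mu + (V *\<^sub>v u - vlo) \<bullet> nlo + (vhi - V *\<^sub>v u) \<bullet> nhi)
      + - (e \<bullet> lam')"
  using stage_lagrangian_identity[OF x u lam lam' rho sig mu nlo nhi state input]
    sqnorm_half_minus[of "Q *\<^sub>v x" q rho] sqnorm_half_minus[of "R *\<^sub>v u" r sig]
    A B F G Q R V x u e h vlo vhi lam lam' rho sig mu nlo nhi
  by (simp add: add_scalar_prod_distrib[of _ nx] minus_scalar_prod_distrib[of _ p]
      minus_scalar_prod_distrib[of _ k] scalar_prod_add_distrib[of mu p]
      scalar_prod_minus_distrib[of "nhi - nlo" k] comm_scalar_prod[of _ p mu]
      comm_scalar_prod[of _ k nlo] comm_scalar_prod[of _ k nhi]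
      scalar_prod_minus_distrib[of mu p] scalar_prod_minus_distrib[of nlo k]
      scalar_prod_minus_distrib[of nhi k])

end

theorem theorem1:
  fixes nx nu mu T p q r :: nat
    and A B F G Q R :: "real mat" and h x0 u0 e0 :: "real vec"
    and vlo vhi lam rho mul nlo nhi sig :: "nat \<Rightarrow> real vec"
  assumes T: "T \<ge> 1"
    and A: "A \<in> carrier_mat nx nx" and B: "B \<in> carrier_mat nx (nu + mu)"
    and F: "F \<in> carrier_mat p nx" and G: "G \<in> carrier_mat p (nu + mu)"
    and h: "h \<in> carrier_vec p"
    and D0: "F *\<^sub>v 0\<^sub>v nx + G *\<^sub>v 0\<^sub>v (nu + mu) \<le> h"
    and Q: "Q \<in> carrier_mat q nx" and R: "R \<in> carrier_mat r (nu + mu)"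
    and x0: "x0 \<in> carrier_vec nx"
    and u0: "u0 \<in> carrier_vec (nu + mu)" and u0bin: "\<forall>i<mu. u0 $ (nu + i) \<in> {0, 1}"
    and x0u0D: "F *\<^sub>v x0 + G *\<^sub>v u0 \<le> h"
    and e0: "e0 \<in> carrier_vec nx"
    and V0: "is_interval mu T vlo vhi"
    and v0in: "vlo 0 \<le> sel_mat nu mu *\<^sub>v u0 \<and> sel_mat nu mu *\<^sub>v u0 \<le> vhi 0"
    and dfeas: "dual_feasible A B F G (sel_mat nu mu) Q R T lam rho mul nlo nhi sig"
  shows
    "let V = sel_mat nu mu; v0 = V *\<^sub>v u0;
         x1 = A *\<^sub>v x0 + B *\<^sub>v u0 + e0;
         vlo1 = (\<lambda>t. if t + 1 < T then vlo (t + 1) else 0\<^sub>v mu);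
         vhi1 = (\<lambda>t. if t + 1 < T then vhi (t + 1) else vec mu (\<lambda>_. 1));
         \<theta>0 = dual_obj h T vlo vhi x0 lam rho mul nlo nhi sig;
         \<pi>1 = - sqnorm (Q *\<^sub>v x0) - sqnorm (R *\<^sub>v u0);
         \<pi>2 = sqnorm ((1/2) \<cdot>\<^sub>v rho 0 - Q *\<^sub>v x0) + sqnorm ((1/2) \<cdot>\<^sub>v sig 0 - R *\<^sub>v u0);
         \<pi>3 = (h - F *\<^sub>v x0 - G *\<^sub>v u0) \<bullet> mul 0 + (v0 - vlo 0) \<bullet> nlo 0
               + (vhi 0 - v0) \<bullet> nhi 0;
         \<pi>4 = - (e0 \<bullet> lam 1)
     in ereal (\<theta>0 + \<pi>1 + \<pi>2 + \<pi>3 + \<pi>4) \<le> theta A B F G h V Q R T vlo1 vhi1 x1"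
proof -
  \<comment> \<open>The bound is exact for the shifted multipliers.\<close>
  define V where "V = sel_mat nu mu"
  have V: "V \<in> carrier_mat mu (nu + mu)"
    unfolding V_def sel_mat_def by simp
  note df = dfeas[folded V_def]
  have T0: "0 < T" using T by simp
  from df A B F G Q R V T0 have stage0:
    "lam 0 \<in> carrier_vec nx" "lam 1 \<in> carrier_vec nx" "rho 0 \<in> carrier_vec q"
    "sig 0 \<in> carrier_vec r" "mul 0 \<in> carrier_vec p" "nlo 0 \<in> carrier_vec mu"
    "nhi 0 \<in> carrier_vec mu"
    "transpose_mat Q *\<^sub>v rho 0 + lam 0 - transpose_mat A *\<^sub>v lam 1
       + transpose_mat F *\<^sub>v mul 0 = 0\<^sub>v nx"
    "transpose_mat R *\<^sub>v sig 0 - transpose_mat B *\<^sub>v lam 1 + transpose_mat G *\<^sub>v mul 0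
       + transpose_mat V *\<^sub>v (nhi 0 - nlo 0) = 0\<^sub>v (nu + mu)"
    unfolding dual_feasible_def by auto
  from V0 T0 have "vlo 0 \<in> carrier_vec mu" "vhi 0 \<in> carrier_vec mu"
    unfolding is_interval_def by auto
  note increment = stage_dual_increment_decomposition[OF A B F G Q R V x0 u0 e0 h this stage0]
  note bound = dual_obj_le_theta[OF A B F G Q R V dual_feasible_shift[OF A B F G Q R V df],
      where h = h and vlo = "shift_seq T (0\<^sub>v mu) vlo" and vhi = "shift_seq T (vec mu (\<lambda>_. 1)) vhi"
      and \<xi> = "A *\<^sub>v x0 + B *\<^sub>v u0 + e0",
      unfolded dual_obj_shift[OF T, where \<xi> = x0] increment]
  show ?thesis
    using bound[unfolded shift_seq_def add.assoc[symmetric]]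
    unfolding Let_def V_def[symmetric] add.assoc[symmetric] .
qed

end
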